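(* Suppose that $n=m$ and $W=(w_{ij})\in(\mathbb{R}_{>0})^{n\times n}$ is symmetric. Then $T=T(W)=(t_{ij})$ is also symmetric, and the Jacobian of the map $$(\log w_{ij},\ 1\le i\le j\le n)\mapsto (\log t_{ij},\ 1\le i\le j\le n)$$ is $\pm 1$.
   Context: The geometric RSK map $T:(\mathbb{R}_{>0})^{n\times m}\to(\mathbb{R}_{>0})^{n\times m}$ is defined by local moves: for $2\le i\le n$, $2\le j\le m$, $l_{ij}$ replaces the submatrix $\begin{pmatrix} x_{i-1,j-1}& x_{i-1,j}\\ x_{i,j-1}& x_{ij}\end{pmatrix}=\begin{pmatrix} a& b\\ c& d\end{pmatrix}$ by $\begin{pmatrix} bc/(ab+ac) & b\\ c& d(b+c) \end{pmatrix}$; $l_{i1}$ replaces $x_{i1}$ by $x_{i-1,1}x_{i1}$; $l_{1j}$ replaces $x_{1j}$ by $x_{1,j-1}x_{1j}$; $l_{11}$ is the identity. With $\pi^j_i=l_{ij}\circ\cdots\circ l_{i1}$, $R_i=\pi_1^{m-i+1}\circ\cdots\circ\pi^m_i$ ($i\le m$), $R_i=\pi^1_{i-m+1}\circ\cdots\circ\pi^m_i$ ($i\ge m$), $T=R_n\circ\cdots\circ R_1$. Here $m=n$. *)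

theory Defs
  imports "HOL-Analysis.Analysis"
begin

text \<open>Matrices are functions nat => nat => real, indexed 1-based: entry (i,j) is x i j,
  meaningful for 1 <= i <= n, 1 <= j <= m.\<close>

definition mupd :: "(nat \<Rightarrow> nat \<Rightarrow> real) \<Rightarrow> nat \<Rightarrow> nat \<Rightarrow> real \<Rightarrow> (nat \<Rightarrow> nat \<Rightarrow> real)" where
  "mupd x i j v = x(i := (x i)(j := v))"

definition lmove :: "nat \<Rightarrow> nat \<Rightarrow> (nat \<Rightarrow> nat \<Rightarrow> real) \<Rightarrow> (nat \<Rightarrow> nat \<Rightarrow> real)" where
  "lmove i j x =
    (if 2 \<le> i \<and> 2 \<le> j then
       (let a = x (i-1) (j-1); b = x (i-1) j; c = x i (j-1); d = x i j
        in mupd (mupd x (i-1) (j-1) (b * c / (a * b + a * c))) i j (d * (b + c)))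
     else if 2 \<le> i \<and> j = 1 then mupd x i 1 (x (i-1) 1 * x i 1)
     else if i = 1 \<and> 2 \<le> j then mupd x 1 j (x 1 (j-1) * x 1 j)
     else x)"

fun piop :: "nat \<Rightarrow> nat \<Rightarrow> (nat \<Rightarrow> nat \<Rightarrow> real) \<Rightarrow> (nat \<Rightarrow> nat \<Rightarrow> real)" where
  "piop i 0 = id"
| "piop i (Suc j) = lmove i (Suc j) \<circ> piop i j"

text \<open>R_i for an n x m matrix: the composition of pi_r^{r+m-i} over
  max(1, i-m+1) <= r <= i, where pi_i^m is applied first and the one with smallest r last.\<close>
definition Rop :: "nat \<Rightarrow> nat \<Rightarrow> (nat \<Rightarrow> nat \<Rightarrow> real) \<Rightarrow> (nat \<Rightarrow> nat \<Rightarrow> real)" where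
  "Rop m i x = fold (\<lambda>r. piop r (r + m - i)) (rev [max 1 (i + 1 - m)..<i + 1]) x"

definition grsk :: "nat \<Rightarrow> nat \<Rightarrow> (nat \<Rightarrow> nat \<Rightarrow> real) \<Rightarrow> (nat \<Rightarrow> nat \<Rightarrow> real)" where
  "grsk n m x = fold (Rop m) [1..<n + 1] x"

definition utri :: "nat \<Rightarrow> (nat \<times> nat) set" where
  "utri n = {(i, j). 1 \<le> i \<and> i \<le> j \<and> j \<le> n}"

definition symexp :: "(nat \<times> nat \<Rightarrow> real) \<Rightarrow> (nat \<Rightarrow> nat \<Rightarrow> real)" where
  "symexp u i j = exp (u (min i j, max i j))"

definition logT :: "nat \<Rightarrow> (nat \<times> nat \<Rightarrow> real) \<Rightarrow> (nat \<times> nat \<Rightarrow> real)" where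
  "logT n u = (\<lambda>(i, j). ln (grsk n n (symexp u) i j))"

definition det_on :: "'a set \<Rightarrow> ('a \<Rightarrow> 'a \<Rightarrow> real) \<Rightarrow> real" where
  "det_on I J = (\<Sum>p | p permutes I. of_int (sign p) * (\<Prod>a\<in>I. J a (p a)))"

end

theory Submission
  imports Defs "Jordan_Normal_Form.Determinant" "HOL-Library.List_Lexorder"
begin

(* T is a word in the local moves l_rc. Moves at cells that are not adjacent commute, so the
   word can be reordered such that each move l_rc with r < c is immediately followed by its
   mirror image l_cr, while the diagonal moves l_rr stand alone. Applied to a symmetric matrix,
   every such block returns a symmetric matrix, which gives the symmetry of T(W). In the
   logarithms of the upper-triangular entries a block acts by an explicit map whose Jacobian
   differs from the identity in at most two rows and has determinant -1 or 1; the chain rule and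
   the multiplicativity of the determinant finish the proof. *)

subsection \<open>Local moves\<close>

lemma lmove_apply:
  "lmove r c x i j =
    (if 2 \<le> r \<and> 2 \<le> c then
       (if i = r - 1 \<and> j = c - 1 then
          x (r-1) c * x r (c-1) / (x (r-1) (c-1) * x (r-1) c + x (r-1) (c-1) * x r (c-1))
        else if i = r \<and> j = c then x r c * (x (r-1) c + x r (c-1))
        else x i j)
     else if 2 \<le> r \<and> c = 1 then (if i = r \<and> j = 1 then x (r-1) 1 * x r 1 else x i j)
     else if r = 1 \<and> 2 \<le> c then (if i = 1 \<and> j = c then x 1 (c-1) * x 1 c else x i j)
     else x i j)"
  by (cases "2 \<le> r \<and> 2 \<le> c") (auto simp: lmove_def mupd_def Let_def)

lemma lmove_inner_upper_left:
  "2 \<le> r \<Longrightarrow> 2 \<le> c \<Longrightarrow> lmove r c x (r-1) (c-1) =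
     x (r-1) c * x r (c-1) / (x (r-1) (c-1) * x (r-1) c + x (r-1) (c-1) * x r (c-1))"
  by (simp add: lmove_def mupd_def Let_def)

lemma lmove_inner_lower_right:
  "2 \<le> r \<Longrightarrow> 2 \<le> c \<Longrightarrow> lmove r c x r c = x r c * (x (r-1) c + x r (c-1))"
  by (simp add: lmove_def mupd_def Let_def)

lemma lmove_border_row: "2 \<le> c \<Longrightarrow> lmove 1 c x 1 c = x 1 (c-1) * x 1 c"
  by (simp add: lmove_def mupd_def)

lemma lmove_border_col: "2 \<le> r \<Longrightarrow> lmove r 1 x r 1 = x (r-1) 1 * x r 1"
  by (simp add: lmove_def mupd_def)

lemma lmove_other:
  "(i, j) \<noteq> (r, c) \<Longrightarrow> \<not> (2 \<le> r \<and> 2 \<le> c \<and> (i, j) = (r-1, c-1)) \<Longrightarrow> lmove r c x i j = x i j"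
  unfolding lmove_apply by auto

definition lmove_reads :: "nat \<Rightarrow> nat \<Rightarrow> (nat \<times> nat) set" where
  "lmove_reads r c = {(r-1, c-1), (r-1, c), (r, c-1), (r, c)}"

definition lmove_writes :: "nat \<Rightarrow> nat \<Rightarrow> (nat \<times> nat) set" where
  "lmove_writes r c = {(r-1, c-1), (r, c)}"

lemma lmove_outside_writes: "(i, j) \<notin> lmove_writes r c \<Longrightarrow> lmove r c x i j = x i j"
  unfolding lmove_apply lmove_writes_def by auto

lemma lmove_cong_reads:
  assumes "\<And>i j. (i, j) \<in> lmove_reads r c \<Longrightarrow> x i j = y i j" and "(i, j) \<in> lmove_writes r c"
  shows "lmove r c x i j = lmove r c y i j"
proof -
  have xy: "x (r-1) (c-1) = y (r-1) (c-1)" "x (r-1) c = y (r-1) c" "x r (c-1) = y r (c-1)" "x r c = y r c"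
    using assms(1) by (auto simp: lmove_reads_def)
  from assms(2) consider "i = r - 1" "j = c - 1" | "i = r" "j = c"
    by (auto simp: lmove_writes_def)
  then show ?thesis
    by cases (use xy in \<open>auto simp: lmove_apply\<close>)
qed

lemma lmove_transpose: "lmove c r (\<lambda>i j. x j i) i j = lmove r c x j i"
proof -
  consider "2 \<le> r" "2 \<le> c" | "2 \<le> r" "c = 1" | "r = 1" "2 \<le> c" | "r \<le> 1" "c \<le> 1"
    | "r = 0" | "c = 0"
    by linarith
  then show ?thesis
  proof cases
    case 1
    then have "c - 1 \<noteq> c" "r - 1 \<noteq> r" by auto
    with 1 show ?thesis
      by (cases "i = c - 1 \<and> j = r - 1"; cases "i = c \<and> j = r") (auto simp: lmove_apply mult.commute add.commute)
  qed (auto simp: lmove_apply mult.commute)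
qed

lemma local_maps_commute:
  fixes f g :: "('i \<Rightarrow> 'j \<Rightarrow> 'v) \<Rightarrow> 'i \<Rightarrow> 'j \<Rightarrow> 'v"
  assumes f_frame: "\<And>x i j. (i, j) \<notin> Wf \<Longrightarrow> f x i j = x i j"
    and f_cong: "\<And>x y i j. (\<And>i j. (i, j) \<in> Rf \<Longrightarrow> x i j = y i j) \<Longrightarrow> (i, j) \<in> Wf \<Longrightarrow> f x i j = f y i j"
    and g_frame: "\<And>x i j. (i, j) \<notin> Wg \<Longrightarrow> g x i j = x i j"
    and g_cong: "\<And>x y i j. (\<And>i j. (i, j) \<in> Rg \<Longrightarrow> x i j = y i j) \<Longrightarrow> (i, j) \<in> Wg \<Longrightarrow> g x i j = g y i j"
    and "Wf \<inter> Rg = {}" "Wg \<inter> Rf = {}" "Wf \<inter> Wg = {}"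
  shows "f (g x) = g (f x)"
proof (intro ext)
  fix i j
  consider "(i, j) \<in> Wf" | "(i, j) \<in> Wg" | "(i, j) \<notin> Wf" "(i, j) \<notin> Wg" by blast
  then show "f (g x) i j = g (f x) i j"
  proof cases
    case 1
    then have "f (g x) i j = f x i j"
      by (intro f_cong) (use g_frame assms(6) in blast)
    moreover have "g (f x) i j = f x i j" using 1 g_frame assms(7) by blast
    ultimately show ?thesis by simp
  next
    case 2
    then have "g (f x) i j = g x i j"
      by (intro g_cong) (use f_frame assms(5) in blast)
    moreover have "f (g x) i j = g x i j" using 2 f_frame assms(7) by blast
    ultimately show ?thesis by simp
  next
    case 3
    then show ?thesis using f_frame g_frame by simp
  qed
qed

definition cells_interact :: "nat \<Rightarrow> nat \<Rightarrow> nat \<Rightarrow> nat \<Rightarrow> bool" where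
  "cells_interact r c r' c' \<longleftrightarrow>
     (r = r' \<and> (c = c' \<or> c = Suc c' \<or> c' = Suc c)) \<or> (c = c' \<and> (r = Suc r' \<or> r' = Suc r))
     \<or> (r' = Suc r \<and> c' = Suc c) \<or> (r = Suc r' \<and> c = Suc c')"

lemma lmove_commute:
  assumes "\<not> cells_interact r c r' c'" "1 \<le> r" "1 \<le> c" "1 \<le> r'" "1 \<le> c'"
  shows "lmove r c (lmove r' c' x) = lmove r' c' (lmove r c x)"
proof (rule local_maps_commute)
  obtain a b a' b' where "r = Suc a" "c = Suc b" "r' = Suc a'" "c' = Suc b'"
    using assms(2-5) by (metis Suc_le_D One_nat_def)
  then show "lmove_writes r c \<inter> lmove_reads r' c' = {}" "lmove_writes r' c' \<inter> lmove_reads r c = {}"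
    "lmove_writes r c \<inter> lmove_writes r' c' = {}"
    using assms(1) by (auto simp: lmove_writes_def lmove_reads_def cells_interact_def)
qed (auto intro: lmove_outside_writes lmove_cong_reads)

subsection \<open>Reordering the moves of T\<close>

type_synonym event = "nat \<times> nat \<times> nat"

text \<open>An event (r, c, t) is an application of the local move l_rc; the time t only serves
  to order the events.\<close>

abbreviation ev_row :: "event \<Rightarrow> nat" where "ev_row e \<equiv> fst e"
abbreviation ev_col :: "event \<Rightarrow> nat" where "ev_col e \<equiv> fst (snd e)"
abbreviation ev_time :: "event \<Rightarrow> nat" where "ev_time e \<equiv> snd (snd e)"

definition run_moves :: "event list \<Rightarrow> (nat \<Rightarrow> nat \<Rightarrow> real) \<Rightarrow> nat \<Rightarrow> nat \<Rightarrow> real" where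
  "run_moves es x = fold (\<lambda>e. lmove (ev_row e) (ev_col e)) es x"

lemma run_moves_Nil [simp]: "run_moves [] x = x"
  and run_moves_Cons [simp]: "run_moves (e # es) x = run_moves es (lmove (ev_row e) (ev_col e) x)"
  and run_moves_append [simp]: "run_moves (es @ fs) x = run_moves fs (run_moves es x)"
  by (simp_all add: run_moves_def)

definition events_interact :: "event \<Rightarrow> event \<Rightarrow> bool" where
  "events_interact e f \<longleftrightarrow> cells_interact (ev_row e) (ev_col e) (ev_row f) (ev_col f)"

lemma run_moves_insort_key:
  fixes key :: "event \<Rightarrow> 'k::linorder"
  assumes "\<forall>f\<in>set es. key f < key e \<longrightarrow> \<not> events_interact e f"
    and "\<forall>f\<in>set (e # es). 1 \<le> ev_row f \<and> 1 \<le> ev_col f"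
  shows "run_moves (insort_key key e es) x = run_moves (e # es) x"
  using assms
proof (induction es arbitrary: x)
  case (Cons f es)
  show ?case
  proof (cases "key e \<le> key f")
    case False
    then have "\<not> events_interact e f" using Cons.prems(1) by simp
    then have "lmove (ev_row e) (ev_col e) (lmove (ev_row f) (ev_col f) x)
        = lmove (ev_row f) (ev_col f) (lmove (ev_row e) (ev_col e) x)"
      using Cons.prems(2) by (intro lmove_commute) (auto simp: events_interact_def)
    with False Cons show ?thesis by simp
  qed simp
qed simp

lemma run_moves_sort_key:
  fixes key :: "event \<Rightarrow> 'k::linorder"
  assumes "sorted_wrt (\<lambda>e f. events_interact e f \<longrightarrow> key e < key f) es"
    and "\<forall>e\<in>set es. 1 \<le> ev_row e \<and> 1 \<le> ev_col e"
  shows "run_moves (sort_key key es) x = run_moves es x"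
  using assms
proof (induction es arbitrary: x)
  case (Cons e es)
  have "run_moves (sort_key key (e # es)) x = run_moves (insort_key key e (sort_key key es)) x"
    by simp
  also have "\<dots> = run_moves (e # sort_key key es) x"
    using Cons.prems by (intro run_moves_insort_key) auto
  also have "\<dots> = run_moves (e # es) x"
    using Cons by simp
  finally show ?case .
qed simp

text \<open>The moves of grsk n n in order of application: R_i applies pi_r^(r+n-i) for
  r = i, i - 1, ..., and the moves of that factor get time i - r.\<close>

definition rsk_word :: "nat \<Rightarrow> event list" where
  "rsk_word n = concat (map (\<lambda>i. concat (map (\<lambda>r. map (\<lambda>c. (r, c, i - r)) [1..<r + n - i + 1])
      (rev [max 1 (i + 1 - n)..<i + 1]))) [1..<n + 1])"

lemma run_moves_concat_map: "run_moves (concat (map g xs)) x = fold (\<lambda>a. run_moves (g a)) xs x"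
  by (induction xs arbitrary: x) auto

lemma grsk_eq_run_moves: "grsk n n x = run_moves (rsk_word n) x"
proof -
  have piop_fold: "piop r k y = fold (\<lambda>c. lmove r c) [1..<k + 1] y" for r k y
    by (induction k arbitrary: y) auto
  have row: "run_moves (map (\<lambda>c. (r, c, t)) cs) y = fold (\<lambda>c. lmove r c) cs y" for r t cs y
    by (induction cs arbitrary: y) auto
  have "Rop n i y = run_moves (concat (map (\<lambda>r. map (\<lambda>c. (r, c, i - r)) [1..<r + n - i + 1])
      (rev [max 1 (i + 1 - n)..<i + 1]))) y" for i y
    unfolding Rop_def run_moves_concat_map row piop_fold by simp
  then show ?thesis
    unfolding grsk_def rsk_word_def run_moves_concat_map by metis
qed

definition rsk_events :: "nat \<Rightarrow> event set" where
  "rsk_events n = {e. 1 \<le> ev_row e \<and> 1 \<le> ev_col e \<and> ev_row e + ev_time e \<le> n \<and> ev_col e + ev_time e \<le> n}"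

lemma mem_rsk_word:
  "e \<in> set (rsk_word n) \<longleftrightarrow> (\<exists>i\<in>set [1..<n + 1]. \<exists>r\<in>set (rev [max 1 (i + 1 - n)..<i + 1]).
     \<exists>c\<in>set [1..<r + n - i + 1]. e = (r, c, i - r))"
  unfolding rsk_word_def set_concat set_map by (auto simp del: upt_Suc set_upt)

lemma set_rsk_word: "set (rsk_word n) = rsk_events n"
proof (intro equalityI subsetI)
  fix e assume "e \<in> set (rsk_word n)"
  then obtain i r c where irc: "i \<in> set [1..<n + 1]" "r \<in> set (rev [max 1 (i + 1 - n)..<i + 1])"
    "c \<in> set [1..<r + n - i + 1]" and e: "e = (r, c, i - r)"
    unfolding mem_rsk_word by blast
  from irc have "1 \<le> i" "i < n + 1" "max 1 (i + 1 - n) \<le> r" "r < i + 1" "1 \<le> c" "c < r + n - i + 1"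
    by (simp_all only: set_upt set_rev atLeastLessThan_iff)
  then show "e \<in> rsk_events n"
    using e by (auto simp: rsk_events_def)
next
  fix e assume e: "e \<in> rsk_events n"
  obtain r c t where et: "e = (r, c, t)" by (cases e)
  have "r + t \<in> set [1..<n + 1]" "r \<in> set (rev [max 1 (r + t + 1 - n)..<r + t + 1])"
    "c \<in> set [1..<r + n - (r + t) + 1]" "e = (r, c, r + t - r)"
    using e et by (auto simp: rsk_events_def)
  then show "e \<in> set (rsk_word n)"
    unfolding mem_rsk_word by blast
qed

definition precedes :: "event \<Rightarrow> event \<Rightarrow> bool" where
  "precedes e f \<longleftrightarrow> ev_row e + ev_time e < ev_row f + ev_time f \<or>
     (ev_row e + ev_time e = ev_row f + ev_time f \<and>
      (ev_row f < ev_row e \<or> (ev_row e = ev_row f \<and> ev_col e < ev_col f)))"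

lemma sorted_wrt_concat_map:
  assumes "\<forall>a\<in>set xs. sorted_wrt P (g a)"
    and "sorted_wrt (\<lambda>a b. \<forall>x\<in>set (g a). \<forall>y\<in>set (g b). P x y) xs"
  shows "sorted_wrt P (concat (map g xs))"
  using assms by (induction xs) (auto simp: sorted_wrt_append)

lemma sorted_rsk_word: "sorted_wrt precedes (rsk_word n)"
  unfolding rsk_word_def
proof (intro sorted_wrt_concat_map ballI)
  fix i r
  show "sorted_wrt precedes (map (\<lambda>c. (r, c, i - r)) [1..<r + n - i + 1])"
    unfolding sorted_wrt_map by (rule sorted_wrt_mono_rel[OF _ sorted_wrt_upt]) (simp add: precedes_def)
  show "sorted_wrt (\<lambda>a b. \<forall>x\<in>set (map (\<lambda>c. (a, c, i - a)) [1..<a + n - i + 1]).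
      \<forall>y\<in>set (map (\<lambda>c. (b, c, i - b)) [1..<b + n - i + 1]). precedes x y) (rev [max 1 (i + 1 - n)..<i + 1])"
    unfolding sorted_wrt_rev by (rule sorted_wrt_mono_rel[OF _ sorted_wrt_upt]) (auto simp: precedes_def)
next
  show "sorted_wrt (\<lambda>a b. \<forall>x\<in>set (concat (map (\<lambda>r. map (\<lambda>c. (r, c, a - r)) [1..<r + n - a + 1])
      (rev [max 1 (a + 1 - n)..<a + 1]))). \<forall>y\<in>set (concat (map (\<lambda>r. map (\<lambda>c. (r, c, b - r)) [1..<r + n - b + 1])
      (rev [max 1 (b + 1 - n)..<b + 1]))). precedes x y) [1..<n + 1]"
    by (rule sorted_wrt_mono_rel[OF _ sorted_wrt_upt]) (auto simp: precedes_def)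
qed

definition level :: "event \<Rightarrow> nat" where
  "level e = 3 * ev_time e + ev_row e + ev_col e"

lemma level_less_if_interact:
  assumes "events_interact e f" "precedes e f"
  shows "level e < level f"
proof -
  obtain r c t r' c' t' where e: "e = (r, c, t)" and f: "f = (r', c', t')"
    by (cases e; cases f)
  have "cells_interact r c r' c'" "r + t < r' + t' \<or> (r + t = r' + t' \<and> (r' < r \<or> (r = r' \<and> c < c')))"
    using assms by (simp_all add: events_interact_def precedes_def e f)
  then have "3 * t + r + c < 3 * t' + r' + c'"
    unfolding cells_interact_def by (elim disjE conjE; linarith)
  then show ?thesis by (simp add: level_def e f)
qed

text \<open>Sorting by this key keeps interacting events in order and puts the event (c, r, t)
  directly after its mirror image (r, c, t).\<close>

definition pair_key :: "event \<Rightarrow> nat list" where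
  "pair_key e = [level e, min (ev_row e) (ev_col e), max (ev_row e) (ev_col e),
     if ev_row e \<le> ev_col e then 0 else 1]"

lemma pair_key_less_if_level_less: "level e < level f \<Longrightarrow> pair_key e < pair_key f"
  by (simp add: pair_key_def)

lemma pair_key_inj: "pair_key e = pair_key f \<Longrightarrow> e = f"
  by (cases e; cases f) (auto simp: pair_key_def level_def min_def max_def split: if_splits)

lemma pair_key_mirror_less: "r < c \<Longrightarrow> pair_key (r, c, t) < pair_key (c, r, t)"
  by (simp add: pair_key_def level_def)

lemma pair_key_between_mirror:
  assumes "r < c" "pair_key (r, c, t) < pair_key g" "pair_key g \<le> pair_key (c, r, t)"
  shows "g = (c, r, t)"
proof (rule pair_key_inj)
  show "pair_key g = pair_key (c, r, t)"
    using assms by (auto simp: pair_key_def level_def min_def max_def split: if_splits)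
qed

inductive mirror_paired :: "event list \<Rightarrow> bool" where
  "mirror_paired []"
| "mirror_paired es \<Longrightarrow> mirror_paired ((r, r, t) # es)"
| "mirror_paired es \<Longrightarrow> r < c \<Longrightarrow> mirror_paired ((r, c, t) # (c, r, t) # es)"

lemma distinct_if_sorted_wrt_irrefl: "(\<And>x. \<not> R x x) \<Longrightarrow> sorted_wrt R xs \<Longrightarrow> distinct xs"
  by (induction xs) auto

lemma mirror_paired_if_sorted:
  assumes "sorted_wrt (\<lambda>e f. pair_key e < pair_key f) es"
    and "\<forall>(r, c, t)\<in>set es. (c, r, t) \<in> set es"
  shows "mirror_paired es"
  using assms
proof (induction "length es" arbitrary: es rule: less_induct)
  case less
  show ?case
  proof (cases es)
    case (Cons e es')
    obtain r c t where e: "e = (r, c, t)" by (cases e)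
    have sorted': "sorted_wrt (\<lambda>e f. pair_key e < pair_key f) es'"
      and above: "\<forall>f\<in>set es'. pair_key e < pair_key f"
      using less.prems(1) Cons by auto
    have mirror: "(c, r, t) \<in> set es" using less.prems(2) Cons e by auto
    have closed: "\<forall>(r, c, t)\<in>set es''. (c, r, t) \<in> set es''"
      if "es = xs @ es''" "\<forall>(r, c, t)\<in>set xs. (c, r, t) \<in> set xs" "distinct es" for xs es''
      using that less.prems(2) by fastforce
    have dist: "distinct es"
      by (rule distinct_if_sorted_wrt_irrefl[OF _ less.prems(1)]) simp
    consider "r = c" | "r < c" | "c < r" by linarith
    then show ?thesis
    proof cases
      case 1
      then have "mirror_paired es'"
        using less.hyps[of es'] sorted' closed[of "[e]" es'] Cons e dist by auto
      then show ?thesis using Cons e 1 by (simp add: mirror_paired.intros)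
    next
      case 2
      then have "(c, r, t) \<in> set es'" using mirror Cons e by auto
      then obtain g es'' where es': "es' = g # es''" by (cases es') auto
      have "pair_key g \<le> pair_key (c, r, t)"
        using sorted' es' \<open>(c, r, t) \<in> set es'\<close> by (auto intro: less_imp_le)
      then have g: "g = (c, r, t)"
        using 2 above es' e by (intro pair_key_between_mirror) auto
      have "mirror_paired es''"
        using less.hyps[of es''] sorted' closed[of "[e, g]" es''] Cons es' e g dist by auto
      then show ?thesis using Cons es' e g 2 by (simp add: mirror_paired.intros)
    next
      case 3
      then have "pair_key (c, r, t) < pair_key e" using e pair_key_mirror_less by simp
      moreover have "(c, r, t) \<in> set es'" using mirror 3 Cons e by auto
      ultimately show ?thesis using above by fastforce
    qed
  qed (simp add: mirror_paired.intros)
qed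

definition pair_word :: "nat \<Rightarrow> event list" where
  "pair_word n = sort_key pair_key (rsk_word n)"

lemma set_pair_word: "set (pair_word n) = rsk_events n"
  by (simp add: pair_word_def set_rsk_word)

lemma grsk_eq_run_pair_word: "grsk n n x = run_moves (pair_word n) x"
proof -
  have "sorted_wrt (\<lambda>e f. events_interact e f \<longrightarrow> pair_key e < pair_key f) (rsk_word n)"
    by (rule sorted_wrt_mono_rel[OF _ sorted_rsk_word])
      (use level_less_if_interact pair_key_less_if_level_less in blast)
  moreover have "\<forall>e\<in>set (rsk_word n). 1 \<le> ev_row e \<and> 1 \<le> ev_col e"
    by (auto simp: set_rsk_word rsk_events_def)
  ultimately show ?thesis
    unfolding grsk_eq_run_moves pair_word_def by (simp add: run_moves_sort_key)
qed

lemma mirror_paired_pair_word: "mirror_paired (pair_word n)"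
proof (rule mirror_paired_if_sorted)
  have "distinct (rsk_word n)"
    by (rule distinct_if_sorted_wrt_irrefl[OF _ sorted_rsk_word]) (simp add: precedes_def)
  moreover have "inj_on pair_key (set (pair_word n))"
    by (rule inj_onI) (rule pair_key_inj)
  ultimately have "distinct (map pair_key (pair_word n))"
    by (simp add: distinct_map pair_word_def)
  moreover have "sorted (map pair_key (pair_word n))"
    by (simp add: pair_word_def)
  ultimately have "sorted_wrt (<) (map pair_key (pair_word n))"
    by (simp add: strict_sorted_iff)
  then show "sorted_wrt (\<lambda>e f. pair_key e < pair_key f) (pair_word n)"
    unfolding sorted_wrt_map .
  show "\<forall>(r, c, t)\<in>set (pair_word n). (c, r, t) \<in> set (pair_word n)"
    by (auto simp: set_pair_word rsk_events_def)
qed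

subsection \<open>Symmetric matrices\<close>

text \<open>For r \<le> c, the joint effect of the moves at (r, c) and (c, r) on the logarithms
  y (i, j), i \<le> j, of the symmetric matrix symexp y; the entry x (r, c - 1) sits at the
  upper-triangular index (min r (c - 1), max r (c - 1)).\<close>

definition log_move :: "nat \<Rightarrow> nat \<Rightarrow> (nat \<times> nat \<Rightarrow> real) \<Rightarrow> nat \<times> nat \<Rightarrow> real" where
  "log_move r c y = (if 2 \<le> r \<and> 2 \<le> c then
      y((r-1, c-1) := y (r-1, c) + y (min r (c-1), max r (c-1)) - y (r-1, c-1)
                         - ln (exp (y (r-1, c)) + exp (y (min r (c-1), max r (c-1)))),
        (r, c) := y (r, c) + ln (exp (y (r-1, c)) + exp (y (min r (c-1), max r (c-1)))))
    else if r = 1 \<and> 2 \<le> c then y((1, c) := y (1, c-1) + y (1, c))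
    else y)"

lemma log_move_other: "p \<noteq> (r-1, c-1) \<Longrightarrow> p \<noteq> (r, c) \<Longrightarrow> log_move r c y p = y p"
  by (auto simp: log_move_def)

lemma log_move_inner_upper_left:
  "2 \<le> r \<Longrightarrow> 2 \<le> c \<Longrightarrow> log_move r c y (r-1, c-1) =
     y (r-1, c) + y (min r (c-1), max r (c-1)) - y (r-1, c-1)
     - ln (exp (y (r-1, c)) + exp (y (min r (c-1), max r (c-1))))"
  by (auto simp: log_move_def)

lemma log_move_inner_lower_right:
  "2 \<le> r \<Longrightarrow> 2 \<le> c \<Longrightarrow>
     log_move r c y (r, c) = y (r, c) + ln (exp (y (r-1, c)) + exp (y (min r (c-1), max r (c-1))))"
  by (simp add: log_move_def)

lemma log_move_border: "2 \<le> c \<Longrightarrow> log_move 1 c y (1, c) = y (1, c - 1) + y (1, c)"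
  by (simp add: log_move_def)

lemma exp_sum_minus_ln_sum:
  "exp ((b::real) + c - a - ln (exp b + exp c)) = exp b * exp c / (exp a * exp b + exp a * exp c)"
proof -
  have "exp b + exp c > 0" by (simp add: add_pos_pos)
  then have "exp (b + c - a - ln (exp b + exp c)) = exp b * exp c / exp a / (exp b + exp c)"
    by (simp add: exp_diff exp_add)
  then show ?thesis by (simp add: field_simps)
qed

lemma exp_plus_ln_sum: "exp ((d::real) + ln (exp b + exp c)) = exp d * (exp b + exp c)"
  by (simp add: exp_add add_pos_pos del: exp_ln_iff)

lemma symexp_upper: "i \<le> j \<Longrightarrow> symexp y i j = exp (y (i, j))"
  by (simp add: symexp_def)

lemma symexp_swap: "symexp y j i = symexp y i j"
  by (simp add: symexp_def min.commute max.commute)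

lemma lmove_symexp_upper:
  assumes "1 \<le> r" "r \<le> c" "i \<le> j"
  shows "lmove r c (symexp y) i j = symexp (log_move r c y) i j"
proof -
  consider "(i, j) \<noteq> (r, c)" "\<not> (2 \<le> r \<and> 2 \<le> c \<and> (i, j) = (r-1, c-1))"
    | "2 \<le> r" "2 \<le> c" "(i, j) = (r-1, c-1)" | "(i, j) = (r, c)"
    by blast
  then show ?thesis
  proof cases
    case 1
    moreover have "log_move r c y (i, j) = y (i, j)"
      using 1 by (auto simp: log_move_def)
    ultimately show ?thesis
      using assms(3) by (simp add: lmove_other symexp_upper)
  next
    case 2
    then have "r - 1 \<le> c - 1" "r - 1 \<le> c" using assms by simp_all
    with 2 show ?thesis
      using lmove_inner_upper_left[of r c "symexp y"] log_move_inner_upper_left[of r c y]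
      by (simp add: symexp_upper exp_sum_minus_ln_sum) (simp add: symexp_def)
  next
    case 3
    consider "2 \<le> r" | "r = 1" "2 \<le> c" | "r = 1" "c = 1" using assms by linarith
    then show ?thesis
    proof cases
      case 1
      then have "2 \<le> c" "r - 1 \<le> c" using assms by simp_all
      with 1 3 assms show ?thesis
        using lmove_inner_lower_right[of r c "symexp y"] log_move_inner_lower_right[of r c y]
        by (simp add: symexp_upper exp_plus_ln_sum) (simp add: symexp_def)
    next
      case 2
      with 3 show ?thesis
        using lmove_border_row[of c "symexp y"] log_move_border[of c y]
        by (simp add: symexp_upper exp_add)
    next
      case 4: 3
      with 3 show ?thesis
        by (simp add: lmove_apply log_move_def)
    qed
  qed
qed

lemma eq_if_symmetric_upper:
  fixes x y :: "nat \<Rightarrow> nat \<Rightarrow> 'a"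
  assumes "\<And>i j. x j i = x i j" "\<And>i j. y j i = y i j" "\<And>i j. i \<le> j \<Longrightarrow> x i j = y i j"
  shows "x = y"
proof (intro ext)
  fix i j
  show "x i j = y i j"
  proof (cases "i \<le> j")
    case False
    then have "x j i = y j i" using assms(3) by simp
    then show ?thesis using assms(1,2) by metis
  qed (rule assms(3))
qed

lemma lmove_diag_symexp:
  assumes "1 \<le> r"
  shows "lmove r r (symexp y) = symexp (log_move r r y)"
proof (rule eq_if_symmetric_upper)
  show "lmove r r (symexp y) j i = lmove r r (symexp y) i j" for i j
    using lmove_transpose[of r r "symexp y" i j] by (simp add: symexp_swap)
qed (use assms in \<open>simp_all add: symexp_swap lmove_symexp_upper\<close>)

lemma lmove_mirror_pair_symexp:
  assumes "1 \<le> r" "r < c"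
  shows "lmove c r (lmove r c (symexp y)) = symexp (log_move r c y)"
proof (rule eq_if_symmetric_upper)
  let ?S = "symexp y"
  have commute: "lmove c r (lmove r c ?S) = lmove r c (lmove c r ?S)"
    using assms by (intro lmove_commute) (auto simp: cells_interact_def)
  have "(\<lambda>a b. lmove c r ?S b a) = lmove r c ?S"
    using lmove_transpose[of r c ?S] by (simp add: symexp_swap fun_eq_iff)
  then show "lmove c r (lmove r c ?S) j i = lmove c r (lmove r c ?S) i j" for i j
    using lmove_transpose[of c r "lmove c r ?S" i j] by (simp add: commute)
  show "lmove c r (lmove r c ?S) i j = symexp (log_move r c y) i j" if "i \<le> j" for i j
  proof -
    have "(i, j) \<notin> lmove_writes c r"
      using assms that by (auto simp: lmove_writes_def)
    then show ?thesis
      using assms that by (simp add: lmove_outside_writes lmove_symexp_upper)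
  qed
qed (rule symexp_swap)

text \<open>A move below the diagonal is accounted for by log_move at its mirror image.\<close>

definition log_step :: "event \<Rightarrow> (nat \<times> nat \<Rightarrow> real) \<Rightarrow> nat \<times> nat \<Rightarrow> real" where
  "log_step e = (if ev_row e \<le> ev_col e then log_move (ev_row e) (ev_col e) else id)"

definition log_run :: "event list \<Rightarrow> (nat \<times> nat \<Rightarrow> real) \<Rightarrow> nat \<times> nat \<Rightarrow> real" where
  "log_run es y = fold log_step es y"

lemma log_run_Nil [simp]: "log_run [] y = y"
  and log_run_Cons [simp]: "log_run (e # es) y = log_run es (log_step e y)"
  by (simp_all add: log_run_def)

lemma run_moves_symexp:
  assumes "mirror_paired es" "\<forall>e\<in>set es. 1 \<le> ev_row e"
  shows "run_moves es (symexp y) = symexp (log_run es y)"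
  using assms
proof (induction es arbitrary: y rule: mirror_paired.induct)
  case (2 es r t)
  then show ?case by (simp add: lmove_diag_symexp log_step_def)
next
  case (3 es r c t)
  then show ?case by (simp add: lmove_mirror_pair_symexp log_step_def)
qed simp

lemma grsk_symexp: "grsk n n (symexp y) = symexp (log_run (pair_word n) y)"
  unfolding grsk_eq_run_pair_word
  by (rule run_moves_symexp[OF mirror_paired_pair_word]) (auto simp: set_pair_word rsk_events_def)

lemma lmove_cong_box:
  assumes agree: "\<And>i j. i \<in> {1..n} \<Longrightarrow> j \<in> {1..n} \<Longrightarrow> x i j = y i j"
    and r: "r \<in> {1..n}" and c: "c \<in> {1..n}" and ij: "i \<in> {1..n}" "j \<in> {1..n}"
  shows "lmove r c x i j = lmove r c y i j"
proof -
  consider "2 \<le> r" "2 \<le> c" "(i, j) \<in> lmove_writes r c" | "(i, j) = (r, c)" "\<not> (2 \<le> r \<and> 2 \<le> c)"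
    | "(i, j) \<noteq> (r, c)" "\<not> (2 \<le> r \<and> 2 \<le> c \<and> (i, j) = (r-1, c-1))"
    by (cases "2 \<le> r \<and> 2 \<le> c"; cases "(i, j) = (r, c)") (auto simp: lmove_writes_def)
  then show ?thesis
  proof cases
    case 1
    then show ?thesis
      using r c by (intro lmove_cong_reads agree) (auto simp: lmove_reads_def)
  next
    case 2
    consider "r = 1" "2 \<le> c" | "2 \<le> r" "c = 1" | "r = 1" "c = 1"
      using 2 r c by fastforce
    then show ?thesis
    proof cases
      case 1
      moreover have "x 1 (c - 1) = y 1 (c - 1)" "x 1 c = y 1 c"
        using 1 c by (intro agree; auto)+
      ultimately show ?thesis
        using 2 lmove_border_row[of c x] lmove_border_row[of c y] by simp
    next
      case 2
      moreover have "x (r - 1) 1 = y (r - 1) 1" "x r 1 = y r 1"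
        using 2 r by (intro agree; auto)+
      ultimately show ?thesis
        using \<open>(i, j) = (r, c)\<close> lmove_border_col[of r x] lmove_border_col[of r y] by simp
    next
      case 3
      then show ?thesis using 2 ij by (simp add: lmove_apply agree)
    qed
  next
    case 3
    then show ?thesis using ij by (simp add: lmove_other agree)
  qed
qed

lemma run_moves_cong_box:
  assumes "\<And>i j. i \<in> {1..n} \<Longrightarrow> j \<in> {1..n} \<Longrightarrow> x i j = y i j" "set es \<subseteq> rsk_events n"
    and "i \<in> {1..n}" "j \<in> {1..n}"
  shows "run_moves es x i j = run_moves es y i j"
  using assms
proof (induction es arbitrary: x y)
  case (Cons e es)
  let ?m = "lmove (ev_row e) (ev_col e)"
  have "ev_row e \<in> {1..n}" "ev_col e \<in> {1..n}"
    using Cons.prems(2) by (auto simp: rsk_events_def)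
  then have "?m x i j = ?m y i j" if "i \<in> {1..n}" "j \<in> {1..n}" for i j
    using Cons.prems(1) that by (intro lmove_cong_box[where n = n])
  then show ?case
    using Cons.IH[of "?m x" "?m y"] Cons.prems(2-4) by simp
qed simp

lemma grsk_symmetric:
  assumes pos: "\<forall>i\<in>{1..n}. \<forall>j\<in>{1..n}. W i j > 0"
    and sym: "\<forall>i\<in>{1..n}. \<forall>j\<in>{1..n}. W i j = W j i"
  shows "\<forall>i\<in>{1..n}. \<forall>j\<in>{1..n}. grsk n n W i j = grsk n n W j i"
proof -
  let ?u = "\<lambda>(i, j). ln (W i j)"
  have box: "W i j = symexp ?u i j" if "i \<in> {1..n}" "j \<in> {1..n}" for i j
    using pos sym that by (cases "i \<le> j") (auto simp: symexp_def min_def max_def)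
  have "grsk n n W i j = symexp (log_run (pair_word n) ?u) i j"
    if "i \<in> {1..n}" "j \<in> {1..n}" for i j
  proof -
    have "grsk n n W i j = grsk n n (symexp ?u) i j"
      unfolding grsk_eq_run_moves
      using box that by (intro run_moves_cong_box[where n = n]) (auto simp: set_rsk_word)
    then show ?thesis by (simp add: grsk_symexp)
  qed
  then show ?thesis by (simp add: symexp_swap)
qed

subsection \<open>Matrices indexed by a finite set\<close>

definition mat_mul_on :: "'a set \<Rightarrow> ('a \<Rightarrow> 'a \<Rightarrow> real) \<Rightarrow> ('a \<Rightarrow> 'a \<Rightarrow> real) \<Rightarrow> 'a \<Rightarrow> 'a \<Rightarrow> real" where
  "mat_mul_on I A B = (\<lambda>i k. \<Sum>j\<in>I. A i j * B j k)"

definition mat_vec_on :: "'a set \<Rightarrow> ('a \<Rightarrow> 'a \<Rightarrow> real) \<Rightarrow> ('a \<Rightarrow> real) \<Rightarrow> 'a \<Rightarrow> real" where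
  "mat_vec_on I A v = (\<lambda>i. \<Sum>j\<in>I. A i j * v j)"

definition id_mat :: "'a \<Rightarrow> 'a \<Rightarrow> real" where
  "id_mat i j = (if i = j then 1 else 0)"

lemma det_on_reindex:
  assumes bij: "bij_betw e J I" and fin: "finite J"
  shows "det_on I M = det_on J (\<lambda>a b. M (e a) (e b))"
proof -
  have inj: "inj_on e J" using bij by (rule bij_betw_imp_inj_on)
  let ?f = "map_permutation J e"
  have "map_permutation J e = (\<lambda>\<pi> x. if x \<in> I then e (\<pi> (inv_into J e x)) else x)"
    using bij by (auto simp: map_permutation_def restrict_id_def bij_betw_def fun_eq_iff)
  then have perms: "bij_betw ?f {\<pi>. \<pi> permutes J} {\<pi>. \<pi> permutes I}"
    using bij_betw_permutations[OF bij] by simp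
  have "det_on I M = (\<Sum>\<tau>\<in>{\<pi>. \<pi> permutes J}. of_int (sign (?f \<tau>)) * (\<Prod>a\<in>I. M a (?f \<tau> a)))"
    unfolding det_on_def by (rule sum.reindex_bij_betw[OF perms, symmetric])
  also have "\<dots> = (\<Sum>\<tau>\<in>{\<pi>. \<pi> permutes J}. of_int (sign \<tau>) * (\<Prod>a\<in>J. M (e a) (e (\<tau> a))))"
  proof (rule sum.cong[OF refl])
    fix \<tau> assume "\<tau> \<in> {\<pi>. \<pi> permutes J}"
    then have \<tau>: "\<tau> permutes J" by simp
    have "(\<Prod>a\<in>I. M a (?f \<tau> a)) = (\<Prod>a\<in>J. M (e a) (?f \<tau> (e a)))"
      by (rule prod.reindex_bij_betw[OF bij, symmetric])
    also have "\<dots> = (\<Prod>a\<in>J. M (e a) (e (\<tau> a)))"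
      by (rule prod.cong[OF refl]) (simp add: map_permutation_apply[OF inj])
    finally show "of_int (sign (?f \<tau>)) * (\<Prod>a\<in>I. M a (?f \<tau> a))
        = of_int (sign \<tau>) * (\<Prod>a\<in>J. M (e a) (e (\<tau> a)))"
      by (simp add: sign_map_permutation[OF inj \<tau> fin])
  qed
  also have "\<dots> = det_on J (\<lambda>a b. M (e a) (e b))" by (simp add: det_on_def)
  finally show ?thesis .
qed

lemma det_on_eq_det: "det_on {0..<N} F = Determinant.det (Matrix.mat N N (\<lambda>(i, j). F i j))"
proof -
  have "Determinant.det (Matrix.mat N N (\<lambda>(i, j). F i j)) =
     (\<Sum>p\<in>{p. p permutes {0..<N}}. signof p * (\<Prod>i = 0..<N. Matrix.mat N N (\<lambda>(i, j). F i j) $$ (i, p i)))"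
    by (rule det_def') simp
  also have "\<dots> = (\<Sum>p\<in>{p. p permutes {0..<N}}. signof p * (\<Prod>i = 0..<N. F i (p i)))"
    by (intro sum.cong prod.cong refl) (auto dest: permutes_in_image)
  finally show ?thesis by (simp add: det_on_def)
qed

lemma det_on_mat_mul_on:
  assumes fin: "finite I"
  shows "det_on I (mat_mul_on I A B) = det_on I A * det_on I B"
proof -
  obtain e where bij: "bij_betw e {0..<card I} I" using ex_bij_betw_nat_finite[OF fin] by blast
  let ?N = "card I"
  let ?mat = "\<lambda>M. Matrix.mat ?N ?N (\<lambda>(i, j). M (e i) (e j))"
  have det: "det_on I M = Determinant.det (?mat M)" for M
    using det_on_reindex[OF bij] det_on_eq_det[of ?N] by simp
  have "?mat (mat_mul_on I A B) = ?mat A * ?mat B"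
  proof (rule eq_matI)
    fix i j assume "i < dim_row (?mat A * ?mat B)" "j < dim_col (?mat A * ?mat B)"
    then have ij: "i < ?N" "j < ?N" by auto
    have "mat_mul_on I A B (e i) (e j) = (\<Sum>k\<in>{0..<?N}. A (e i) (e k) * B (e k) (e j))"
      unfolding mat_mul_on_def by (rule sum.reindex_bij_betw[OF bij, symmetric])
    with ij show "?mat (mat_mul_on I A B) $$ (i, j) = (?mat A * ?mat B) $$ (i, j)"
      by (simp add: scalar_prod_def)
  qed auto
  then show ?thesis
    by (simp add: det det_mult[of _ ?N])
qed

lemma det_on_unit_rows:
  assumes fin: "finite I" and KI: "K \<subseteq> I"
    and rows: "\<And>p q. p \<in> I - K \<Longrightarrow> q \<in> I \<Longrightarrow> M p q = id_mat p q"
    and diag: "\<And>p q. p \<in> K \<Longrightarrow> q \<in> K \<Longrightarrow> p \<noteq> q \<Longrightarrow> M p q = 0"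
  shows "det_on I M = (\<Prod>k\<in>K. M k k)"
proof -
  let ?P = "{\<sigma>. \<sigma> permutes I}"
  let ?f = "\<lambda>\<sigma>. of_int (sign \<sigma>) * (\<Prod>a\<in>I. M a (\<sigma> a))"
  have "?f \<sigma> = 0" if "\<sigma> permutes I" "\<sigma> \<noteq> id" for \<sigma>
  proof -
    obtain p where p: "\<sigma> p \<noteq> p" using \<open>\<sigma> \<noteq> id\<close> by (auto simp: fun_eq_iff)
    then have pI: "p \<in> I"
      using that(1) by (meson permutes_not_in)
    then have \<sigma>pI: "\<sigma> p \<in> I"
      using that(1) by (simp add: permutes_in_image)
    (* the moved point p gives a zero factor in its own row, unless p \<in> K and \<sigma> p \<notin> K,
       in which case the moved point \<sigma> p gives one in its row *)
    have "\<exists>a\<in>I. M a (\<sigma> a) = 0"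
    proof (cases "p \<in> K \<and> \<sigma> p \<notin> K")
      case True
      have "\<sigma> (\<sigma> p) \<noteq> \<sigma> p"
        using p permutes_inj[OF that(1)] by (metis injD)
      then show ?thesis
        using rows[of "\<sigma> p" "\<sigma> (\<sigma> p)"] True \<sigma>pI that(1)
        by (auto simp: id_mat_def permutes_in_image)
    next
      case False
      then show ?thesis
        using rows[of p "\<sigma> p"] diag[of p "\<sigma> p"] p pI \<sigma>pI by (auto simp: id_mat_def)
    qed
    then show ?thesis using fin by (simp add: prod_zero)
  qed
  then have "sum ?f (?P - {id}) = 0"
    by (intro sum.neutral) auto
  moreover have "det_on I M = ?f id + sum ?f (?P - {id})"
    unfolding det_on_def using fin by (intro sum.remove) (auto simp: finite_permutations)
  ultimately have "det_on I M = ?f id" by simp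
  also have "\<dots> = (\<Prod>a\<in>K. M a a) * (\<Prod>a\<in>I - K. M a a)"
    using prod.subset_diff[OF KI fin] by (simp add: mult.commute)
  also have "(\<Prod>a\<in>I - K. M a a) = 1"
    using rows by (simp add: id_mat_def)
  finally show ?thesis by simp
qed

lemma det_on_id_mat: "finite I \<Longrightarrow> det_on I id_mat = 1"
  using det_on_unit_rows[of I "{}" id_mat] by simp

lemma mat_vec_on_mat_mul_on:
  "finite I \<Longrightarrow> mat_vec_on I (mat_mul_on I A B) v = mat_vec_on I A (mat_vec_on I B v)"
  unfolding mat_vec_on_def mat_mul_on_def
  by (auto simp: fun_eq_iff sum_distrib_left sum_distrib_right mult.assoc intro: sum.swap)

lemma sum_indicator_mult:
  "finite I \<Longrightarrow> a \<in> I \<Longrightarrow> (\<Sum>q\<in>I. (if q = a then k else 0) * v q) = k * (v a :: real)"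
  by (simp add: if_distrib[of "\<lambda>x. x * _"] cong: if_cong)

lemma mat_vec_on_id_mat: "finite I \<Longrightarrow> p \<in> I \<Longrightarrow> mat_vec_on I id_mat v p = v p"
  using sum_indicator_mult[of I p 1 v] by (simp add: mat_vec_on_def id_mat_def eq_commute)

subsection \<open>The Jacobian\<close>

definition has_coord_derivs ::
    "'a set \<Rightarrow> (real \<Rightarrow> 'a \<Rightarrow> real) \<Rightarrow> ('a \<Rightarrow> real) \<Rightarrow> real \<Rightarrow> bool" where
  "has_coord_derivs I G v s0 \<longleftrightarrow> (\<forall>p\<in>I. ((\<lambda>s. G s p) has_real_derivative v p) (at s0))"

definition exp_weight :: "real \<Rightarrow> real \<Rightarrow> real" where
  "exp_weight a b = exp a / (exp a + exp b)"

lemma exp_weight_complement: "1 - exp_weight a b = exp_weight b a"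
proof -
  have "exp a + exp b > 0" by (simp add: add_pos_pos)
  then show ?thesis by (simp add: exp_weight_def field_simps)
qed

lemma has_real_derivative_ln_exp_sum:
  assumes "(f has_real_derivative f') (at s0)" "(g has_real_derivative g') (at s0)"
  shows "((\<lambda>s. ln (exp (f s) + exp (g s))) has_real_derivative
     exp_weight (f s0) (g s0) * f' + exp_weight (g s0) (f s0) * g') (at s0)"
proof -
  have "0 < exp (f s0) + exp (g s0)" by (simp add: add_pos_pos)
  from DERIV_chain2[OF DERIV_ln_divide[OF this] DERIV_add[OF DERIV_fun_exp DERIV_fun_exp, OF assms]]
  show ?thesis by (simp add: exp_weight_def add_divide_distrib add.commute)
qed

text \<open>Jacobian matrix of log_move r c for 2 \<le> r \<le> c; B and C are the cells of the
  entries x (r - 1, c) and x (r, c - 1).\<close>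

definition inner_jac :: "nat \<Rightarrow> nat \<Rightarrow> (nat \<times> nat \<Rightarrow> real) \<Rightarrow> nat \<times> nat \<Rightarrow> nat \<times> nat \<Rightarrow> real" where
  "inner_jac r c y p q =
    (let B = (r-1, c); C = (min r (c-1), max r (c-1)); wB = exp_weight (y B) (y C); wC = exp_weight (y C) (y B) in
     if p = (r-1, c-1) then (if q = p then -1 else 0) + (if q = B then wC else 0) + (if q = C then wB else 0)
     else if p = (r, c) then (if q = p then 1 else 0) + (if q = B then wB else 0) + (if q = C then wC else 0)
     else id_mat p q)"

definition border_jac :: "nat \<Rightarrow> nat \<times> nat \<Rightarrow> nat \<times> nat \<Rightarrow> real" where
  "border_jac c p q = (if p = (1, c) then (if q = p then 1 else 0) + (if q = (1, c-1) then 1 else 0) else id_mat p q)"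

lemma finite_utri: "finite (utri n)"
  by (rule finite_subset[of _ "{1..n} \<times> {1..n}"]) (auto simp: utri_def)

lemma mat_vec_on_other_row:
  assumes "finite I" "p \<in> I" "\<And>q. M p q = id_mat p q"
  shows "mat_vec_on I M v p = v p"
  using assms mat_vec_on_id_mat[of I p v] by (simp add: mat_vec_on_def)

lemma has_coord_derivs_log_move_inner:
  assumes rc: "2 \<le> r" "r \<le> c" "c \<le> n" and G: "has_coord_derivs (utri n) G v s0"
  shows "has_coord_derivs (utri n) (\<lambda>s. log_move r c (G s)) (mat_vec_on (utri n) (inner_jac r c (G s0)) v) s0"
  unfolding has_coord_derivs_def
proof
  fix p assume p: "p \<in> utri n"
  obtain a b where ab: "r = Suc a" "c = Suc b"
    using rc by (cases r; cases c) auto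
  let ?A = "(a, b)" and ?B = "(a, Suc b)" and ?C = "(min (Suc a) b, max (Suc a) b)" and ?D = "(Suc a, Suc b)"
  let ?L = "\<lambda>s. ln (exp (G s ?B) + exp (G s ?C))"
  let ?wB = "exp_weight (G s0 ?B) (G s0 ?C)" and ?wC = "exp_weight (G s0 ?C) (G s0 ?B)"
  let ?Jv = "mat_vec_on (utri n) (inner_jac r c (G s0)) v"
  have cells: "?A \<in> utri n" "?B \<in> utri n" "?C \<in> utri n" "?D \<in> utri n"
    using rc ab by (auto simp: utri_def min_def max_def)
  have dG: "((\<lambda>s. G s q) has_real_derivative v q) (at s0)" if "q \<in> utri n" for q
    using G that by (simp add: has_coord_derivs_def)
  have dL: "(?L has_real_derivative ?wB * v ?B + ?wC * v ?C) (at s0)"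
    by (intro has_real_derivative_ln_exp_sum dG cells)
  have ne: "?A \<noteq> ?D" "?A \<noteq> ?B" "?A \<noteq> ?C" "?D \<noteq> ?B" "?D \<noteq> ?C"
    using rc ab by (auto simp: min_def max_def)
  note sums = sum.distrib distrib_right sum_indicator_mult finite_utri cells
  consider "p = ?A" | "p = ?D" | "p \<noteq> ?A" "p \<noteq> ?D" by blast
  then show "((\<lambda>s. log_move r c (G s) p) has_real_derivative ?Jv p) (at s0)"
  proof cases
    case 1
    have "?Jv p = - v ?A + ?wC * v ?B + ?wB * v ?C"
      using 1 ne by (simp add: mat_vec_on_def inner_jac_def Let_def ab sums)
    also have "\<dots> = v ?B + v ?C - v ?A - (?wB * v ?B + ?wC * v ?C)"
      unfolding exp_weight_complement[of "G s0 ?B" "G s0 ?C", symmetric] by (simp add: algebra_simps)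
    finally have Jv: "?Jv p = \<dots>" .
    have "((\<lambda>s. G s ?B + G s ?C - G s ?A - ?L s) has_real_derivative ?Jv p) (at s0)"
      unfolding Jv by (intro DERIV_diff DERIV_add dG cells dL)
    then show ?thesis
      using 1 rc log_move_inner_upper_left[of r c] by (simp add: ab)
  next
    case 2
    have "?Jv p = v ?D + (?wB * v ?B + ?wC * v ?C)"
      using 2 ne by (simp add: mat_vec_on_def inner_jac_def Let_def ab sums)
    then have "((\<lambda>s. G s ?D + ?L s) has_real_derivative ?Jv p) (at s0)"
      by (simp only:) (intro DERIV_add dG cells dL)
    then show ?thesis
      using 2 rc log_move_inner_lower_right[of r c] by (simp add: ab)
  next
    case 3
    then have "?Jv p = v p"
      by (intro mat_vec_on_other_row[OF finite_utri p]) (simp add: inner_jac_def ab)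
    then show ?thesis
      using 3 dG[OF p] log_move_other[of p r c] by (simp add: ab)
  qed
qed

lemma has_coord_derivs_log_move_border:
  assumes c: "2 \<le> c" "c \<le> n" and G: "has_coord_derivs (utri n) G v s0"
  shows "has_coord_derivs (utri n) (\<lambda>s. log_move 1 c (G s)) (mat_vec_on (utri n) (border_jac c) v) s0"
  unfolding has_coord_derivs_def
proof
  fix p assume p: "p \<in> utri n"
  obtain b where b: "c = Suc b"
    using c by (cases c) auto
  have cells: "(1, c) \<in> utri n" "(1, b) \<in> utri n"
    using c b by (auto simp: utri_def)
  have dG: "((\<lambda>s. G s q) has_real_derivative v q) (at s0)" if "q \<in> utri n" for q
    using G that by (simp add: has_coord_derivs_def)
  show "((\<lambda>s. log_move 1 c (G s) p) has_real_derivative mat_vec_on (utri n) (border_jac c) v p) (at s0)"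
  proof (cases "p = (1, c)")
    case True
    then have "mat_vec_on (utri n) (border_jac c) v p = v (1, c) + v (1, b)"
      using b sum_indicator_mult[OF finite_utri cells(1)] sum_indicator_mult[OF finite_utri cells(2)]
      by (simp add: border_jac_def mat_vec_on_def sum.distrib distrib_right)
    moreover have "((\<lambda>s. G s (1, b) + G s (1, c)) has_real_derivative v (1, b) + v (1, c)) (at s0)"
      by (intro DERIV_add dG cells)
    ultimately show ?thesis
      using True c b log_move_border[of c] by (simp add: add.commute)
  next
    case False
    moreover have "p \<noteq> (0, c - 1)" using p by (auto simp: utri_def)
    moreover have "mat_vec_on (utri n) (border_jac c) v p = v p"
      using False by (intro mat_vec_on_other_row[OF finite_utri p]) (simp add: border_jac_def)
    ultimately show ?thesis
      using dG[OF p] log_move_other[of p 1 c] by simp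
  qed
qed

definition step_jac :: "event \<Rightarrow> (nat \<times> nat \<Rightarrow> real) \<Rightarrow> nat \<times> nat \<Rightarrow> nat \<times> nat \<Rightarrow> real" where
  "step_jac e y =
    (if 2 \<le> ev_row e \<and> ev_row e \<le> ev_col e then inner_jac (ev_row e) (ev_col e) y
     else if ev_row e = 1 \<and> 2 \<le> ev_col e then border_jac (ev_col e)
     else id_mat)"

lemma has_coord_derivs_log_step:
  assumes e: "e \<in> rsk_events n" and G: "has_coord_derivs (utri n) G v s0"
  shows "has_coord_derivs (utri n) (\<lambda>s. log_step e (G s)) (mat_vec_on (utri n) (step_jac e (G s0)) v) s0"
proof -
  obtain r c t where rct: "e = (r, c, t)" by (cases e)
  have bounds: "1 \<le> r" "c \<le> n" using e rct by (auto simp: rsk_events_def)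
  consider "2 \<le> r" "r \<le> c" | "r = 1" "2 \<le> c" | "c < r \<or> r = 1 \<and> c \<le> 1"
    using bounds by linarith
  then show ?thesis
  proof cases
    case 1
    then show ?thesis
      using has_coord_derivs_log_move_inner[OF 1 bounds(2) G] by (simp add: rct log_step_def step_jac_def)
  next
    case 2
    then show ?thesis
      using has_coord_derivs_log_move_border[OF 2(2) bounds(2) G] by (simp add: rct log_step_def step_jac_def)
  next
    case 3
    then have "log_step e = id" "step_jac e (G s0) = id_mat"
      using bounds by (auto simp: rct log_step_def step_jac_def log_move_def fun_eq_iff)
    then show ?thesis
      using G by (simp add: has_coord_derivs_def mat_vec_on_id_mat finite_utri)
  qed
qed

lemma det_inner_jac:
  assumes "2 \<le> r" "r \<le> c" "c \<le> n"
  shows "det_on (utri n) (inner_jac r c y) = -1"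
proof -
  obtain a b where ab: "r = Suc a" "c = Suc b"
    using assms by (cases r; cases c) auto
  let ?A = "(a, b)" and ?D = "(Suc a, Suc b)"
  have "det_on (utri n) (inner_jac r c y) = (\<Prod>k\<in>{?A, ?D}. inner_jac r c y k k)"
  proof (rule det_on_unit_rows[OF finite_utri])
    show "{?A, ?D} \<subseteq> utri n"
      using assms ab by (auto simp: utri_def)
    show "inner_jac r c y p q = id_mat p q" if "p \<in> utri n - {?A, ?D}" for p q
      using that by (simp add: inner_jac_def ab)
    show "inner_jac r c y p q = 0" if "p \<in> {?A, ?D}" "q \<in> {?A, ?D}" "p \<noteq> q" for p q
      using that assms ab by (auto simp: inner_jac_def Let_def min_def max_def)
  qed
  also have "\<dots> = -1"
    using assms ab by (auto simp: inner_jac_def Let_def min_def max_def)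
  finally show ?thesis .
qed

lemma det_border_jac:
  assumes "2 \<le> c" "c \<le> n"
  shows "det_on (utri n) (border_jac c) = 1"
proof -
  have "det_on (utri n) (border_jac c) = (\<Prod>k\<in>{(1, c)}. border_jac c k k)"
  proof (rule det_on_unit_rows[OF finite_utri])
    show "{(1, c)} \<subseteq> utri n"
      using assms by (auto simp: utri_def)
    show "border_jac c p q = id_mat p q" if "p \<in> utri n - {(1, c)}" for p q
      using that by (simp add: border_jac_def)
  qed simp
  also have "\<dots> = 1"
    using assms by (simp add: border_jac_def)
  finally show ?thesis .
qed

lemma det_step_jac:
  assumes e: "e \<in> rsk_events n"
  shows "det_on (utri n) (step_jac e y) \<in> {1, -1}"
proof -
  have "ev_col e \<le> n" using e by (auto simp: rsk_events_def)
  then show ?thesis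
    by (simp add: step_jac_def det_inner_jac det_border_jac det_on_id_mat finite_utri)
qed

fun log_run_jac :: "nat \<Rightarrow> event list \<Rightarrow> (nat \<times> nat \<Rightarrow> real) \<Rightarrow> nat \<times> nat \<Rightarrow> nat \<times> nat \<Rightarrow> real" where
  "log_run_jac n [] y = id_mat"
| "log_run_jac n (e # es) y = mat_mul_on (utri n) (log_run_jac n es (log_step e y)) (step_jac e y)"

lemma has_coord_derivs_log_run:
  assumes "set es \<subseteq> rsk_events n" "has_coord_derivs (utri n) G v s0"
  shows "has_coord_derivs (utri n) (\<lambda>s. log_run es (G s)) (mat_vec_on (utri n) (log_run_jac n es (G s0)) v) s0"
  using assms
proof (induction es arbitrary: G v)
  case Nil
  then show ?case by (simp add: has_coord_derivs_def mat_vec_on_id_mat finite_utri)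
next
  case (Cons e es)
  have "has_coord_derivs (utri n) (\<lambda>s. log_step e (G s)) (mat_vec_on (utri n) (step_jac e (G s0)) v) s0"
    using Cons.prems by (intro has_coord_derivs_log_step) auto
  with Cons.IH[of "\<lambda>s. log_step e (G s)"] Cons.prems(1) show ?case
    by (simp add: mat_vec_on_mat_mul_on finite_utri)
qed

lemma det_log_run_jac:
  assumes "set es \<subseteq> rsk_events n"
  shows "det_on (utri n) (log_run_jac n es y) \<in> {1, -1}"
  using assms
proof (induction es arbitrary: y)
  case Nil
  then show ?case by (simp add: det_on_id_mat finite_utri)
next
  case (Cons e es)
  then have "det_on (utri n) (log_run_jac n es (log_step e y)) \<in> {1, -1}"
    and "det_on (utri n) (step_jac e y) \<in> {1, -1}"
    using det_step_jac[of e n y] by simp_all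
  then show ?case by (auto simp: det_on_mat_mul_on finite_utri)
qed

lemma logT_eq_log_run: "p \<in> utri n \<Longrightarrow> logT n y p = log_run (pair_word n) y p"
  by (auto simp: logT_def grsk_symexp symexp_def utri_def)

lemma logT_jacobian:
  fixes u :: "nat \<times> nat \<Rightarrow> real"
  shows "\<exists>J. (\<forall>p\<in>utri n. \<forall>q\<in>utri n. ((\<lambda>s. logT n (u(q := s)) p) has_real_derivative J p q) (at (u q)))
          \<and> (det_on (utri n) J = 1 \<or> det_on (utri n) J = -1)"
proof (intro exI conjI ballI)
  let ?J = "log_run_jac n (pair_word n) u"
  have word: "set (pair_word n) \<subseteq> rsk_events n" by (simp add: set_pair_word)
  fix p q assume p: "p \<in> utri n" and q: "q \<in> utri n"
  have "has_coord_derivs (utri n) (\<lambda>s. u(q := s)) (\<lambda>p'. if p' = q then 1 else 0) (u q)"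
    by (simp add: has_coord_derivs_def)
  from has_coord_derivs_log_run[OF word this]
  have "((\<lambda>s. log_run (pair_word n) (u(q := s)) p) has_real_derivative
      mat_vec_on (utri n) ?J (\<lambda>p'. if p' = q then 1 else 0) p) (at (u q))"
    using p by (simp add: has_coord_derivs_def)
  moreover have "mat_vec_on (utri n) ?J (\<lambda>p'. if p' = q then 1 else 0) p = ?J p q"
    using q by (simp add: mat_vec_on_def finite_utri if_distrib[of "\<lambda>x. _ * x"] cong: if_cong)
  ultimately show "((\<lambda>s. logT n (u(q := s)) p) has_real_derivative ?J p q) (at (u q))"
    using p by (simp add: logT_eq_log_run)
next
  show "det_on (utri n) (log_run_jac n (pair_word n) u) = 1 \<or> det_on (utri n) (log_run_jac n (pair_word n) u) = -1"
    using det_log_run_jac[of "pair_word n" n u] by (simp add: set_pair_word)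
qed

theorem theorem5p2:
  fixes n :: nat and W :: "nat \<Rightarrow> nat \<Rightarrow> real"
  assumes pos: "\<forall>i\<in>{1..n}. \<forall>j\<in>{1..n}. W i j > 0"
    and sym: "\<forall>i\<in>{1..n}. \<forall>j\<in>{1..n}. W i j = W j i"
  shows "(\<forall>i\<in>{1..n}. \<forall>j\<in>{1..n}. grsk n n W i j = grsk n n W j i)
    \<and> (\<exists>J. (\<forall>p\<in>utri n. \<forall>q\<in>utri n.
              ((\<lambda>s. logT n ((\<lambda>(i, j). ln (W i j))(q := s)) p) has_real_derivative J p q)
                (at (ln (W (fst q) (snd q)))))
          \<and> (det_on (utri n) J = 1 \<or> det_on (utri n) J = -1))"
  using grsk_symmetric[OF pos sym] logT_jacobian[of n "\<lambda>(i, j). ln (W i j)"]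
  by (simp add: case_prod_beta)

end
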